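(* Let $n\ge2$, $h=0$, $\epsilon\in[-1,1]$. If $n$ is even, let $C^*=C(\tfrac n2,0,0)\cup C(0,\tfrac n2,0)\cup C(n,\tfrac n2,\tfrac n2)\cup C(\tfrac n2,n,\tfrac n2)$. If $n$ is odd, let $C^*=C(\tfrac{n+1}2,0,0)\cup C(0,\tfrac{n+1}2,0)\cup C(n,\tfrac{n-1}2,\tfrac{n-1}2)\cup C(\tfrac{n-1}2,n,\tfrac{n-1}2)$ when $\epsilon\ge0$, and $C^*=C(\tfrac{n-1}2,0,0)\cup C(0,\tfrac{n-1}2,0)\cup C(n,\tfrac{n+1}2,\tfrac{n+1}2)\cup C(\tfrac{n+1}2,n,\tfrac{n+1}2)$ when $\epsilon<0$. Then for any distinct $s_1,s_2\in\mathcal X_s$, the set $C^*$ is a gate for the transition from $s_1$ to $s_2$.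
   Context: Setup. Fix an integer $n\ge2$, $\epsilon\in[-1,1]$, $h\in[0,1]$. The graph $\mathcal G(2,n)$ has vertex set $V=V^{(1)}\cup V^{(2)}$ with $V^{(1)}=\{1,\dots,n\}$, $V^{(2)}=\{n+1,\dots,2n\}$; its edge set is $E=E_{\mathrm{int}}\cup E_{\mathrm{cross}}$, where $E_{\mathrm{int}}$ consists of all pairs of distinct vertices in the same $V^{(k)}$ and $E_{\mathrm{cross}}=\{\{i,i+n\}:1\le i\le n\}$. The configuration space is $\mathcal X=\{-1,+1\}^V$ and $H(\sigma)=-\sum_{\{i,j\}\in E_{\mathrm{int}}}\sigma_i\sigma_j-\epsilon\sum_{\{i,j\}\in E_{\mathrm{cross}}}\sigma_i\sigma_j-h\sum_{i\in V}\sigma_i$. For integers $0\le p_1,p_2\le n$ and $a$, $C(p_1,p_2,a)$ is the set of configurations with exactly $p_1$ vertices of spin $+1$ in $V^{(1)}$, exactly $p_2$ vertices of spin $+1$ in $V^{(2)}$, and exactly $a$ cross-edges both of whose endpoints have spin $+1$. $\mathbf{+1},\mathbf{-1}$ are the all-plus and all-minus configurations; $\mathbf{\pm1}$ equals $+1$ on $V^{(1)}$ and $-1$ on $V^{(2)}$, $\mathbf{\mp1}$ the reverse. The stable states $\mathcal X_s$ are the global minimizers of $H$. Paths and gates. Two configurations are neighbours if they differ at exactly one vertex; a path is a finite sequence of configurations with consecutive ones neighbours. $\Phi(\eta,\eta')=\min_{\omega:\eta\to\eta'}\max_{\zeta\in\omega}H(\zeta)$. The optimal paths $(\eta\to\eta')_{opt}$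 are the paths from $\eta$ to $\eta'$ with $\max_{\xi\in\omega}H(\xi)=\Phi(\eta,\eta')$. The minimal saddles $\mathcal S(\eta,\eta')$ are the configurations $\zeta$ lying on some optimal path $\omega$ with $H(\zeta)=\max_{\xi\in\omega}H(\xi)$. A set $\mathcal W$ is a gate for the transition $\eta\to\eta'$ if $\mathcal W\subseteq\mathcal S(\eta,\eta')$ and every optimal path from $\eta$ to $\eta'$ intersects $\mathcal W$. *)

theory Defs
  imports Complex_Main
begin

text \<open>Vertices are the naturals 1..2n;
  a configuration is a function nat => int with values in {-1,1} on the vertex
  set and value 0 outside it (canonical representation).\<close>

definition verts :: "nat \<Rightarrow> nat set" where
  "verts n = {1..2*n}"

definition block1 :: "nat \<Rightarrow> nat set" where
  "block1 n = {1..n}"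

definition block2 :: "nat \<Rightarrow> nat set" where
  "block2 n = {n+1..2*n}"

definition E_int :: "nat \<Rightarrow> (nat \<times> nat) set" where
  "E_int n = {(i,j). i < j \<and> ((i \<in> block1 n \<and> j \<in> block1 n) \<or> (i \<in> block2 n \<and> j \<in> block2 n))}"

definition E_cross :: "nat \<Rightarrow> (nat \<times> nat) set" where
  "E_cross n = {(i, i+n) | i. i \<in> block1 n}"

definition configs :: "nat \<Rightarrow> (nat \<Rightarrow> int) set" where
  "configs n = {\<sigma>. (\<forall>i\<in>verts n. \<sigma> i = 1 \<or> \<sigma> i = -1) \<and> (\<forall>i. i \<notin> verts n \<longrightarrow> \<sigma> i = 0)}"

definition Ham :: "nat \<Rightarrow> real \<Rightarrow> real \<Rightarrow> (nat \<Rightarrow> int) \<Rightarrow> real" where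
  "Ham n \<epsilon> h \<sigma> =
     - (\<Sum>(i,j)\<in>E_int n. real_of_int (\<sigma> i * \<sigma> j))
     - \<epsilon> * (\<Sum>(i,j)\<in>E_cross n. real_of_int (\<sigma> i * \<sigma> j))
     - h * (\<Sum>i\<in>verts n. real_of_int (\<sigma> i))"

definition stable_states :: "nat \<Rightarrow> real \<Rightarrow> real \<Rightarrow> (nat \<Rightarrow> int) set" where
  "stable_states n \<epsilon> h =
     {\<sigma> \<in> configs n. \<forall>\<tau>\<in>configs n. Ham n \<epsilon> h \<sigma> \<le> Ham n \<epsilon> h \<tau>}"

definition neighbours :: "nat \<Rightarrow> (nat \<Rightarrow> int) \<Rightarrow> (nat \<Rightarrow> int) \<Rightarrow> bool" where
  "neighbours n \<sigma> \<tau> \<longleftrightarrow> \<sigma> \<in> configs n \<and> \<tau> \<in> configs n \<and>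
     card {i \<in> verts n. \<sigma> i \<noteq> \<tau> i} = 1"

definition is_path :: "nat \<Rightarrow> (nat \<Rightarrow> int) \<Rightarrow> (nat \<Rightarrow> int) \<Rightarrow> (nat \<Rightarrow> int) list \<Rightarrow> bool" where
  "is_path n \<eta> \<eta>' \<omega> \<longleftrightarrow> \<omega> \<noteq> [] \<and> hd \<omega> = \<eta> \<and> last \<omega> = \<eta>' \<and>
     set \<omega> \<subseteq> configs n \<and>
     (\<forall>k. Suc k < length \<omega> \<longrightarrow> neighbours n (\<omega> ! k) (\<omega> ! Suc k))"

definition path_height :: "nat \<Rightarrow> real \<Rightarrow> real \<Rightarrow> (nat \<Rightarrow> int) list \<Rightarrow> real" where
  "path_height n \<epsilon> h \<omega> = Max (Ham n \<epsilon> h ` set \<omega>)"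

definition comm_height :: "nat \<Rightarrow> real \<Rightarrow> real \<Rightarrow> (nat \<Rightarrow> int) \<Rightarrow> (nat \<Rightarrow> int) \<Rightarrow> real" where
  "comm_height n \<epsilon> h \<eta> \<eta>' = Inf {path_height n \<epsilon> h \<omega> | \<omega>. is_path n \<eta> \<eta>' \<omega>}"

definition opt_paths :: "nat \<Rightarrow> real \<Rightarrow> real \<Rightarrow> (nat \<Rightarrow> int) \<Rightarrow> (nat \<Rightarrow> int) \<Rightarrow> (nat \<Rightarrow> int) list set" where
  "opt_paths n \<epsilon> h \<eta> \<eta>' =
     {\<omega>. is_path n \<eta> \<eta>' \<omega> \<and> path_height n \<epsilon> h \<omega> = comm_height n \<epsilon> h \<eta> \<eta>'}"

definition min_saddles :: "nat \<Rightarrow> real \<Rightarrow> real \<Rightarrow> (nat \<Rightarrow> int) \<Rightarrow> (nat \<Rightarrow> int) \<Rightarrow> (nat \<Rightarrow> int) set" where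
  "min_saddles n \<epsilon> h \<eta> \<eta>' =
     {\<zeta>. \<exists>\<omega>\<in>opt_paths n \<epsilon> h \<eta> \<eta>'. \<zeta> \<in> set \<omega> \<and> Ham n \<epsilon> h \<zeta> = path_height n \<epsilon> h \<omega>}"

definition is_gate :: "nat \<Rightarrow> real \<Rightarrow> real \<Rightarrow> (nat \<Rightarrow> int) set \<Rightarrow> (nat \<Rightarrow> int) \<Rightarrow> (nat \<Rightarrow> int) \<Rightarrow> bool" where
  "is_gate n \<epsilon> h W \<eta> \<eta>' \<longleftrightarrow> W \<subseteq> min_saddles n \<epsilon> h \<eta> \<eta>' \<and>
     (\<forall>\<omega>\<in>opt_paths n \<epsilon> h \<eta> \<eta>'. set \<omega> \<inter> W \<noteq> {})"

definition Ccl :: "nat \<Rightarrow> nat \<Rightarrow> nat \<Rightarrow> nat \<Rightarrow> (nat \<Rightarrow> int) set" where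
  "Ccl n p1 p2 a = {\<sigma> \<in> configs n.
      card {i \<in> block1 n. \<sigma> i = 1} = p1 \<and>
      card {i \<in> block2 n. \<sigma> i = 1} = p2 \<and>
      card {i \<in> block1 n. \<sigma> i = 1 \<and> \<sigma> (i+n) = 1} = a}"

definition Cstar :: "nat \<Rightarrow> real \<Rightarrow> (nat \<Rightarrow> int) set" where
  "Cstar n \<epsilon> =
    (if even n then
       Ccl n (n div 2) 0 0 \<union> Ccl n 0 (n div 2) 0 \<union> Ccl n n (n div 2) (n div 2) \<union> Ccl n (n div 2) n (n div 2)
     else if \<epsilon> \<ge> 0 then
       Ccl n ((n+1) div 2) 0 0 \<union> Ccl n 0 ((n+1) div 2) 0 \<union>
       Ccl n n ((n-1) div 2) ((n-1) div 2) \<union> Ccl n ((n-1) div 2) n ((n-1) div 2)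
     else
       Ccl n ((n-1) div 2) 0 0 \<union> Ccl n 0 ((n-1) div 2) 0 \<union>
       Ccl n n ((n+1) div 2) ((n+1) div 2) \<union> Ccl n ((n+1) div 2) n ((n+1) div 2))"

end

theory Submission
  imports Defs
begin

text \<open>For \<open>h = 0\<close> the energy of a configuration depends only on the numbers \<open>p1\<close>, \<open>p2\<close>
  of plus spins in the two cliques and the number \<open>a\<close> of cross edges with two plus spins.
  Let \<open>\<Gamma>\<close> be its value on \<open>C*\<close>. Every configuration with a constant block has energy at
  most \<open>\<Gamma>\<close>, and these configurations form a connected set containing the stable states,
  which have both blocks constant; hence \<open>\<Phi>(s1, s2) \<le> \<Gamma>\<close>.

  Conversely, call a configuration a barrier if its energy exceeds \<open>\<Gamma>\<close> or it lies in \<open>C*\<close>.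
  A single spin flip that moves the sign of \<open>2p1 - n\<close> or of \<open>2p2 - n\<close> always has a barrier
  as one of its endpoints, so these signs are constant along paths avoiding barriers.
  Distinct stable states differ in these signs, so every path between them meets a barrier.
  Therefore \<open>\<Phi>(s1, s2) = \<Gamma>\<close>, and an optimal path, which never exceeds \<open>\<Gamma>\<close>,
  must meet \<open>C*\<close>.\<close>

section \<open>The energy in terms of block counts\<close>

definition strict_pairs :: "nat \<Rightarrow> nat \<Rightarrow> (nat \<times> nat) set" where
  "strict_pairs a m = {(i, j). a < i \<and> i < j \<and> j \<le> a + m}"

lemma finite_strict_pairs: "finite (strict_pairs a m)"
  by (rule finite_subset[of _ "{..a+m} \<times> {..a+m}"]) (auto simp: strict_pairs_def)

lemma strict_pairs_Suc:
  "strict_pairs a (Suc m) = strict_pairs a m \<union> (\<lambda>i. (i, a + Suc m)) ` {a<..a+m}"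
  unfolding strict_pairs_def by auto

lemma sum_strict_pairs_sign_products:
  fixes f :: "nat \<Rightarrow> int"
  assumes "\<forall>i\<in>{a<..a+m}. f i = 1 \<or> f i = -1"
  shows "2 * (\<Sum>(i,j)\<in>strict_pairs a m. f i * f j) = (\<Sum>i\<in>{a<..a+m}. f i)^2 - int m"
  using assms
proof (induction m)
  case 0
  have "strict_pairs a 0 = {}" by (auto simp: strict_pairs_def)
  then show ?case by simp
next
  case (Suc m)
  let ?y = "f (a + Suc m)" and ?T = "\<Sum>i\<in>{a<..a+m}. f i"
  have "?y = 1 \<or> ?y = -1" using Suc.prems by simp
  then have y: "?y * ?y = 1" by auto
  have IH: "2 * (\<Sum>(i,j)\<in>strict_pairs a m. f i * f j) = ?T^2 - int m"
    using Suc by auto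
  have "(\<Sum>(i,j)\<in>strict_pairs a (Suc m). f i * f j)
      = (\<Sum>(i,j)\<in>strict_pairs a m. f i * f j) + (\<Sum>i\<in>{a<..a+m}. f i * ?y)"
    unfolding strict_pairs_Suc
  proof (subst sum.union_disjoint)
    show "strict_pairs a m \<inter> (\<lambda>i. (i, a + Suc m)) ` {a<..a+m} = {}"
      by (auto simp: strict_pairs_def)
  qed (auto simp: finite_strict_pairs sum.reindex inj_on_def)
  moreover have "{a<..a+Suc m} = insert (a + Suc m) {a<..a+m}" by auto
  then have "(\<Sum>i\<in>{a<..a+Suc m}. f i) = ?T + ?y" by simp
  moreover have "(\<Sum>i\<in>{a<..a+m}. f i * ?y) = ?T * ?y"
    by (simp add: sum_distrib_right)
  ultimately show ?case
    using IH y by (simp add: power2_eq_square algebra_simps)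
qed

lemma sum_sign_eq_card:
  fixes f :: "nat \<Rightarrow> int"
  assumes "finite B" "\<forall>i\<in>B. f i = 1 \<or> f i = -1"
  shows "(\<Sum>i\<in>B. f i) = 2 * int (card {i\<in>B. f i = 1}) - int (card B)"
proof -
  have "(\<Sum>i\<in>B. f i) = (\<Sum>i\<in>B. 2 * (if f i = 1 then 1 else 0) - 1)"
    by (rule sum.cong) (use assms(2) in auto)
  also have "\<dots> = 2 * (\<Sum>i\<in>B. if f i = 1 then 1 else 0) - int (card B)"
    by (simp add: sum_subtractf sum_distrib_left)
  finally show ?thesis
    using assms(1) by (simp add: sum.inter_filter[symmetric])
qed

lemma finite_block1 [simp]: "finite (block1 n)" and finite_block2 [simp]: "finite (block2 n)"
  by (simp_all add: block1_def block2_def)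

lemma card_block1 [simp]: "card (block1 n) = n" and card_block2 [simp]: "card (block2 n) = n"
  by (simp_all add: block1_def block2_def)

lemma verts_eq_blocks: "verts n = block1 n \<union> block2 n"
  unfolding verts_def block1_def block2_def by auto

lemma block1_notin_block2: "i \<in> block1 n \<Longrightarrow> i \<notin> block2 n"
  unfolding block1_def block2_def by auto

lemma configs_sign: "\<sigma> \<in> configs n \<Longrightarrow> i \<in> verts n \<Longrightarrow> \<sigma> i = 1 \<or> \<sigma> i = -1"
  unfolding configs_def by auto

definition plus1 :: "nat \<Rightarrow> (nat \<Rightarrow> int) \<Rightarrow> nat" where
  "plus1 n \<sigma> = card {i \<in> block1 n. \<sigma> i = 1}"

definition plus2 :: "nat \<Rightarrow> (nat \<Rightarrow> int) \<Rightarrow> nat" where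
  "plus2 n \<sigma> = card {i \<in> block2 n. \<sigma> i = 1}"

definition plus_cross :: "nat \<Rightarrow> (nat \<Rightarrow> int) \<Rightarrow> nat" where
  "plus_cross n \<sigma> = card {i \<in> block1 n. \<sigma> i = 1 \<and> \<sigma> (i + n) = 1}"

lemma Ccl_iff_counts:
  "\<sigma> \<in> Ccl n p1 p2 a \<longleftrightarrow> \<sigma> \<in> configs n \<and> (plus1 n \<sigma>, plus2 n \<sigma>, plus_cross n \<sigma>) = (p1, p2, a)"
  unfolding Ccl_def plus1_def plus2_def plus_cross_def by simp

lemma plus2_eq_card_shifted: "plus2 n \<sigma> = card {i \<in> block1 n. \<sigma> (i + n) = 1}"
proof -
  have "bij_betw (\<lambda>i. i + n) {i \<in> block1 n. \<sigma> (i + n) = 1} {i \<in> block2 n. \<sigma> i = 1}"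
    by (rule bij_betw_byWitness[where f' = "\<lambda>j. j - n"]) (auto simp: block1_def block2_def)
  then show ?thesis
    unfolding plus2_def by (simp add: bij_betw_same_card)
qed

text \<open>The internal energy of a block with \<open>p\<close> plus spins is \<open>((2p - n)^2 - n)/2\<close>,
  and \<open>p1 + p2 - 2a\<close> is the number of cross edges with disagreeing spins.\<close>
definition energy :: "nat \<Rightarrow> real \<Rightarrow> nat \<Rightarrow> nat \<Rightarrow> nat \<Rightarrow> real" where
  "energy n \<epsilon> p1 p2 a = real n - ((2 * real p1 - real n)^2 + (2 * real p2 - real n)^2) / 2
      - \<epsilon> * (real n - 2 * (real p1 + real p2 - 2 * real a))"

lemma energy_swap: "energy n \<epsilon> p2 p1 a = energy n \<epsilon> p1 p2 a"
  unfolding energy_def by (simp add: algebra_simps)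

lemma E_int_eq_strict_pairs: "E_int n = strict_pairs 0 n \<union> strict_pairs n n"
  unfolding E_int_def strict_pairs_def block1_def block2_def by auto

lemma sum_block_pairs:
  assumes "\<sigma> \<in> configs n" and "{a<..a+n} \<subseteq> verts n"
  shows "2 * (\<Sum>(i,j)\<in>strict_pairs a n. \<sigma> i * \<sigma> j)
    = (2 * int (card {i \<in> {a<..a+n}. \<sigma> i = 1}) - int n)^2 - int n"
proof -
  have "\<forall>i\<in>{a<..a+n}. \<sigma> i = 1 \<or> \<sigma> i = -1"
    using configs_sign[OF assms(1)] assms(2) by auto
  with sum_sign_eq_card[of "{a<..a+n}"] show ?thesis
    using sum_strict_pairs_sign_products by simp
qed

lemma sum_E_int:
  assumes "\<sigma> \<in> configs n"
  shows "(\<Sum>(i,j)\<in>E_int n. real_of_int (\<sigma> i * \<sigma> j)) =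
     ((2 * real (plus1 n \<sigma>) - real n)^2 - real n) / 2 + ((2 * real (plus2 n \<sigma>) - real n)^2 - real n) / 2"
proof -
  have "block1 n = {0<..0+n}" "block2 n = {n<..n+n}" "{0<..0+n} \<subseteq> verts n" "{n<..n+n} \<subseteq> verts n"
    unfolding block1_def block2_def verts_def by auto
  then have "2 * (\<Sum>(i,j)\<in>strict_pairs 0 n. \<sigma> i * \<sigma> j) = (2 * int (plus1 n \<sigma>) - int n)^2 - int n"
    and "2 * (\<Sum>(i,j)\<in>strict_pairs n n. \<sigma> i * \<sigma> j) = (2 * int (plus2 n \<sigma>) - int n)^2 - int n"
    using sum_block_pairs[OF assms] unfolding plus1_def plus2_def by simp_all
  moreover have "strict_pairs 0 n \<inter> strict_pairs n n = {}"
    unfolding strict_pairs_def by auto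
  then have "(\<Sum>(i,j)\<in>E_int n. \<sigma> i * \<sigma> j)
      = (\<Sum>(i,j)\<in>strict_pairs 0 n. \<sigma> i * \<sigma> j) + (\<Sum>(i,j)\<in>strict_pairs n n. \<sigma> i * \<sigma> j)"
    unfolding E_int_eq_strict_pairs by (simp add: sum.union_disjoint finite_strict_pairs)
  ultimately have "real_of_int (2 * (\<Sum>(i,j)\<in>E_int n. \<sigma> i * \<sigma> j)) =
      real_of_int ((2 * int (plus1 n \<sigma>) - int n)^2 - int n + ((2 * int (plus2 n \<sigma>) - int n)^2 - int n))"
    by (simp only: distrib_left)
  then show ?thesis
    by (simp add: of_int_sum case_prod_beta' field_simps)
qed

lemma sum_E_cross:
  assumes "\<sigma> \<in> configs n"
  shows "(\<Sum>(i,j)\<in>E_cross n. real_of_int (\<sigma> i * \<sigma> j)) =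
     real n - 2 * (real (plus1 n \<sigma>) + real (plus2 n \<sigma>) - 2 * real (plus_cross n \<sigma>))"
proof -
  let ?ind = "\<lambda>P. if P then 1 else 0 :: real"
  have "E_cross n = (\<lambda>i. (i, i + n)) ` block1 n"
    unfolding E_cross_def by auto
  then have "(\<Sum>(i,j)\<in>E_cross n. real_of_int (\<sigma> i * \<sigma> j)) = (\<Sum>i\<in>block1 n. real_of_int (\<sigma> i * \<sigma> (i + n)))"
    by (simp add: sum.reindex inj_on_def)
  also have "\<dots> = (\<Sum>i\<in>block1 n. 1 - 2 * (?ind (\<sigma> i = 1) + ?ind (\<sigma> (i + n) = 1)
        - 2 * ?ind (\<sigma> i = 1 \<and> \<sigma> (i + n) = 1)))"
  proof (rule sum.cong)
    fix i assume "i \<in> block1 n"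
    then have "i \<in> verts n" "i + n \<in> verts n"
      unfolding verts_def block1_def by auto
    then show "real_of_int (\<sigma> i * \<sigma> (i + n)) = 1 - 2 * (?ind (\<sigma> i = 1) + ?ind (\<sigma> (i + n) = 1)
        - 2 * ?ind (\<sigma> i = 1 \<and> \<sigma> (i + n) = 1))"
      using configs_sign[OF assms \<open>i \<in> verts n\<close>] configs_sign[OF assms \<open>i + n \<in> verts n\<close>] by auto
  qed simp
  also have "\<dots> = real n - 2 * ((\<Sum>i\<in>block1 n. ?ind (\<sigma> i = 1)) + (\<Sum>i\<in>block1 n. ?ind (\<sigma> (i + n) = 1))
        - 2 * (\<Sum>i\<in>block1 n. ?ind (\<sigma> i = 1 \<and> \<sigma> (i + n) = 1)))"
    by (simp add: sum_subtractf sum.distrib sum_distrib_left)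
  also have "\<dots> = real n - 2 * (real (plus1 n \<sigma>) + real (plus2 n \<sigma>) - 2 * real (plus_cross n \<sigma>))"
    by (simp add: sum.inter_filter[symmetric] plus1_def plus_cross_def plus2_eq_card_shifted)
  finally show ?thesis .
qed

lemma Ham_eq_energy:
  assumes "\<sigma> \<in> configs n"
  shows "Ham n \<epsilon> 0 \<sigma> = energy n \<epsilon> (plus1 n \<sigma>) (plus2 n \<sigma>) (plus_cross n \<sigma>)"
  unfolding Ham_def sum_E_int[OF assms] sum_E_cross[OF assms] energy_def by (simp add: field_simps)

definition admissible :: "nat \<Rightarrow> nat \<Rightarrow> nat \<Rightarrow> nat \<Rightarrow> bool" where
  "admissible n p1 p2 a \<longleftrightarrow> p1 \<le> n \<and> p2 \<le> n \<and> a \<le> p1 \<and> a \<le> p2 \<and> p1 + p2 \<le> n + a"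

lemma admissible_swap: "admissible n p2 p1 a = admissible n p1 p2 a"
  unfolding admissible_def by auto

lemma admissible_counts: "admissible n (plus1 n \<sigma>) (plus2 n \<sigma>) (plus_cross n \<sigma>)"
proof -
  let ?A = "{i \<in> block1 n. \<sigma> i = 1}" and ?B = "{i \<in> block1 n. \<sigma> (i + n) = 1}"
  have "card ?A \<le> n" "card ?B \<le> n" "card (?A \<inter> ?B) \<le> card ?A" "card (?A \<inter> ?B) \<le> card ?B"
    by (auto intro: card_mono[of "block1 n", simplified] card_mono)
  moreover have "card (?A \<union> ?B) \<le> n"
    using card_mono[of "block1 n" "?A \<union> ?B"] by auto
  moreover have "card (?A \<union> ?B) + card (?A \<inter> ?B) = card ?A + card ?B"
    using card_Un_Int[of ?A ?B] by simp
  moreover have "?A \<inter> ?B = {i \<in> block1 n. \<sigma> i = 1 \<and> \<sigma> (i + n) = 1}"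
    by auto
  ultimately show ?thesis
    unfolding admissible_def plus1_def plus_cross_def plus2_eq_card_shifted by auto
qed

lemma cross_term_bounds:
  assumes "admissible n p1 p2 a"
  shows "\<bar>real n - 2 * (real p1 + real p2 - 2 * real a)\<bar> \<le> real n"
    and "p1 \<noteq> p2 \<Longrightarrow> real n - 2 * (real p1 + real p2 - 2 * real a) \<le> real n - 2"
    and "p1 + p2 \<noteq> n \<Longrightarrow> 2 - real n \<le> real n - 2 * (real p1 + real p2 - 2 * real a)"
proof -
  have "real a \<le> real p1" "real a \<le> real p2" "real p1 + real p2 \<le> real n + real a"
    using assms unfolding admissible_def by (simp_all flip: of_nat_add)
  then show "\<bar>real n - 2 * (real p1 + real p2 - 2 * real a)\<bar> \<le> real n"
    by simp
  show "real n - 2 * (real p1 + real p2 - 2 * real a) \<le> real n - 2" if "p1 \<noteq> p2"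
  proof -
    have "2 * a + 1 \<le> p1 + p2"
      using assms that unfolding admissible_def by linarith
    then have "real (2 * a + 1) \<le> real (p1 + p2)"
      by (rule of_nat_mono)
    then show ?thesis
      by simp
  qed
  show "2 - real n \<le> real n - 2 * (real p1 + real p2 - 2 * real a)" if "p1 + p2 \<noteq> n"
  proof -
    have "p1 + p2 + 1 \<le> n + 2 * a"
      using assms that unfolding admissible_def by linarith
    then have "real (p1 + p2 + 1) \<le> real (n + 2 * a)"
      by (rule of_nat_mono)
    then show ?thesis
      by simp
  qed
qed

lemma square_le_of_interior:
  assumes "0 < p" "p < n"
  shows "(2 * real p - real n)^2 \<le> (real n)^2 - 4 * real n + 4"
proof -
  have "\<bar>2 * real p - real n\<bar> \<le> real n - 2"
    using assms by linarith
  then have "\<bar>2 * real p - real n\<bar>^2 \<le> (real n - 2)^2"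
    by (rule power_mono) simp
  then show ?thesis
    by (simp add: power2_eq_square algebra_simps)
qed

section \<open>Critical energy and barriers\<close>

definition crit_energy :: "nat \<Rightarrow> real \<Rightarrow> real" where
  "crit_energy n \<epsilon> =
    (if even n then real n - (real n)^2 / 2 else real n - ((real n)^2 + 1) / 2 + \<bar>\<epsilon>\<bar>)"

definition Cstar_counts :: "nat \<Rightarrow> real \<Rightarrow> nat \<Rightarrow> nat \<Rightarrow> nat \<Rightarrow> bool" where
  "Cstar_counts n \<epsilon> p1 p2 a \<longleftrightarrow>
    (if even n then
       (p1, p2, a) \<in> {(n div 2, 0, 0), (0, n div 2, 0), (n, n div 2, n div 2), (n div 2, n, n div 2)}
     else if \<epsilon> \<ge> 0 then
       (p1, p2, a) \<in> {((n+1) div 2, 0, 0), (0, (n+1) div 2, 0), (n, (n-1) div 2, (n-1) div 2),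
                      ((n-1) div 2, n, (n-1) div 2)}
     else
       (p1, p2, a) \<in> {((n-1) div 2, 0, 0), (0, (n-1) div 2, 0), (n, (n+1) div 2, (n+1) div 2),
                      ((n+1) div 2, n, (n+1) div 2)})"

lemma Cstar_iff_counts:
  "\<sigma> \<in> Cstar n \<epsilon> \<longleftrightarrow> \<sigma> \<in> configs n \<and> Cstar_counts n \<epsilon> (plus1 n \<sigma>) (plus2 n \<sigma>) (plus_cross n \<sigma>)"
  unfolding Cstar_def Cstar_counts_def
  by (cases "even n"; cases "0 \<le> \<epsilon>"; simp only: if_True if_False Un_iff Ccl_iff_counts insert_iff empty_iff; blast)

lemma energy_eq_crit_of_Cstar_counts:
  assumes "Cstar_counts n \<epsilon> p1 p2 a"
  shows "energy n \<epsilon> p1 p2 a = crit_energy n \<epsilon>"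
proof (cases "even n")
  case True
  then obtain m where m: "n = 2 * m" by blast
  have "(p1, p2, a) \<in> {(m, 0, 0), (0, m, 0), (n, m, m), (m, n, m)}"
    using assms True m unfolding Cstar_counts_def by simp
  then show ?thesis
    unfolding energy_def crit_energy_def using True m by (auto simp: power2_eq_square algebra_simps)
next
  case False
  then obtain m where m: "n = 2 * m + 1" using oddE by blast
  show ?thesis
  proof (cases "\<epsilon> \<ge> 0")
    case True
    have "(p1, p2, a) \<in> {(m + 1, 0, 0), (0, m + 1, 0), (n, m, m), (m, n, m)}"
      using assms True False m unfolding Cstar_counts_def by simp
    then show ?thesis
      unfolding energy_def crit_energy_def using True False m by (auto simp: power2_eq_square algebra_simps)
  next
    case neg: False
    have "(p1, p2, a) \<in> {(m, 0, 0), (0, m, 0), (n, m + 1, m + 1), (m + 1, n, m + 1)}"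
      using assms neg False m unfolding Cstar_counts_def by simp
    then show ?thesis
      unfolding energy_def crit_energy_def using neg False m by (auto simp: power2_eq_square algebra_simps)
  qed
qed

definition barrier :: "nat \<Rightarrow> real \<Rightarrow> nat \<Rightarrow> nat \<Rightarrow> nat \<Rightarrow> bool" where
  "barrier n \<epsilon> p1 p2 a \<longleftrightarrow> crit_energy n \<epsilon> < energy n \<epsilon> p1 p2 a \<or> Cstar_counts n \<epsilon> p1 p2 a"

lemma Cstar_counts_swap: "Cstar_counts n \<epsilon> p2 p1 a = Cstar_counts n \<epsilon> p1 p2 a"
  unfolding Cstar_counts_def by auto

lemma barrier_swap: "barrier n \<epsilon> p2 p1 a = barrier n \<epsilon> p1 p2 a"
  unfolding barrier_def by (simp add: Cstar_counts_swap energy_swap)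

lemma barrier_counts_iff:
  assumes "\<sigma> \<in> configs n"
  shows "barrier n \<epsilon> (plus1 n \<sigma>) (plus2 n \<sigma>) (plus_cross n \<sigma>) \<longleftrightarrow>
    crit_energy n \<epsilon> < Ham n \<epsilon> 0 \<sigma> \<or> \<sigma> \<in> Cstar n \<epsilon>"
  unfolding barrier_def Ham_eq_energy[OF assms] Cstar_iff_counts using assms by simp

lemma mult_le_abs_mult:
  fixes e x N :: real
  assumes "\<bar>x\<bar> \<le> N"
  shows "e * x \<le> \<bar>e\<bar> * N"
proof -
  have "\<bar>e * x\<bar> \<le> \<bar>e\<bar> * N"
    unfolding abs_mult using assms by (simp add: mult_left_mono)
  then show ?thesis
    by linarith
qed

lemma barrier_even:
  assumes "even n" "admissible n p1 p2 a" "2 * p1 = n" "2 * p2 \<noteq> n" "\<bar>\<epsilon>\<bar> \<le> 1"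
  shows "barrier n \<epsilon> p1 p2 a"
proof -
  consider "p2 = 0" | "p2 = n" | "0 < p2" "p2 < n"
    using assms(2) unfolding admissible_def by linarith
  then show ?thesis
  proof cases
    case 3
    have "3 \<le> n"
      using assms(1,4) 3 by presburger
    then have "real n \<ge> 3"
      by simp
    moreover note square_le_of_interior[OF 3]
    moreover have "\<epsilon> * (real n - 2 * (real p1 + real p2 - 2 * real a)) \<le> \<bar>\<epsilon>\<bar> * real n"
      using mult_le_abs_mult[OF cross_term_bounds(1)[OF assms(2)]] .
    moreover have "\<bar>\<epsilon>\<bar> * real n \<le> real n"
      using assms(5) by (simp add: mult_left_le_one_le)
    moreover have "(2 * real p1 - real n)^2 = 0"
      using assms(3) by (simp flip: of_nat_mult)
    moreover have "crit_energy n \<epsilon> = real n - (real n)^2 / 2"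
      using assms(1) by (simp add: crit_energy_def)
    ultimately have "crit_energy n \<epsilon> < energy n \<epsilon> p1 p2 a"
      unfolding energy_def by argo
    then show ?thesis
      unfolding barrier_def ..
  qed (use assms in \<open>auto simp: barrier_def Cstar_counts_def admissible_def\<close>)
qed

lemma frustrated_cross_term_le:
  assumes "admissible n p1 p2 a" "odd n" "0 \<le> \<epsilon> \<longleftrightarrow> (2 * p1 < n \<longleftrightarrow> n < 2 * p2)"
  shows "\<epsilon> * (real n - 2 * (real p1 + real p2 - 2 * real a)) \<le> \<bar>\<epsilon>\<bar> * (real n - 2)"
proof (cases "0 \<le> \<epsilon>")
  case True
  then have "p1 \<noteq> p2"
    using assms(2,3) by auto
  with True show ?thesis
    using cross_term_bounds(2)[OF assms(1)] by (simp add: mult_left_mono)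
next
  case False
  then have "p1 + p2 \<noteq> n"
    using assms(2,3) by auto
  with False have "\<epsilon> * (real n - 2 * (real p1 + real p2 - 2 * real a)) \<le> \<epsilon> * (2 - real n)"
    using cross_term_bounds(3)[OF assms(1)] by (simp add: mult_left_mono_neg)
  with False show ?thesis
    by (simp add: algebra_simps)
qed

text \<open>For odd \<open>n\<close> the flip across the middle of block 1 is a barrier at the endpoint whose
  block magnetisations have opposite signs if \<open>\<epsilon> \<ge> 0\<close>, equal signs if \<open>\<epsilon> < 0\<close>.\<close>
lemma barrier_odd:
  assumes "odd n" "admissible n p1 p2 a" "2 * p1 + 1 = n \<or> 2 * p1 = n + 1"
    and "0 \<le> \<epsilon> \<longleftrightarrow> (2 * p1 < n \<longleftrightarrow> n < 2 * p2)" "\<bar>\<epsilon>\<bar> \<le> 1"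
  shows "barrier n \<epsilon> p1 p2 a"
proof -
  obtain m where m: "n = 2 * m + 1"
    using assms(1) oddE by blast
  consider "p2 = 0" | "p2 = n" | "0 < p2" "p2 < n"
    using assms(2) unfolding admissible_def by linarith
  then show ?thesis
  proof cases
    case 3
    have "3 \<le> n"
      using m 3 by presburger
    then have "real n \<ge> 3"
      by simp
    moreover note square_le_of_interior[OF 3]
    moreover have "p1 = m \<or> p1 = m + 1"
      using assms(3) m by linarith
    then have "(2 * real p1 - real n)^2 = 1"
      using m by (auto simp: power2_eq_square algebra_simps)
    moreover note frustrated_cross_term_le[OF assms(2,1,4)]
    moreover have "\<bar>\<epsilon>\<bar> * real n \<le> real n"
      using assms(5) by (simp add: mult_left_le_one_le)
    moreover have "crit_energy n \<epsilon> = real n - ((real n)^2 + 1) / 2 + \<bar>\<epsilon>\<bar>"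
      using assms(1) by (simp add: crit_energy_def)
    ultimately have "crit_energy n \<epsilon> < energy n \<epsilon> p1 p2 a"
      unfolding energy_def by argo
    then show ?thesis
      unfolding barrier_def ..
  qed (use assms m in \<open>auto simp: barrier_def Cstar_counts_def admissible_def\<close>)
qed

definition side :: "nat \<Rightarrow> nat \<Rightarrow> int" where
  "side n p = sgn (2 * int p - int n)"

lemma side_Suc_eq:
  assumes "\<bar>\<epsilon>\<bar> \<le> 1" "admissible n p p2 a" "admissible n (Suc p) p2 b"
    and "\<not> barrier n \<epsilon> p p2 a" "\<not> barrier n \<epsilon> (Suc p) p2 b"
  shows "side n (Suc p) = side n p"
proof (rule ccontr)
  assume "side n (Suc p) \<noteq> side n p"
  then have crossing: "2 * p = n \<or> 2 * Suc p = n \<or> 2 * p + 1 = n"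
    unfolding side_def by (auto simp: sgn_if split: if_splits)
  have "barrier n \<epsilon> p p2 a \<or> barrier n \<epsilon> (Suc p) p2 b"
  proof (cases "even n")
    case even: True
    then have middle: "2 * p = n \<or> 2 * Suc p = n"
      using crossing by presburger
    show ?thesis
    proof (cases "2 * p2 = n")
      case False
      then show ?thesis
        using middle barrier_even[OF even assms(2) _ False assms(1)]
          barrier_even[OF even assms(3) _ False assms(1)] by blast
    next
      case True
      have "2 * p \<noteq> n \<or> 2 * Suc p \<noteq> n"
        by presburger
      then show ?thesis
        using barrier_even[OF even _ True _ assms(1)] assms(2,3)
        by (metis admissible_swap barrier_swap)
    qed
  next
    case odd: False
    then have "2 * p + 1 = n"
      using crossing by presburger
    then show ?thesis
      using barrier_odd[OF odd assms(2) _ _ assms(1)] barrier_odd[OF odd assms(3) _ _ assms(1)]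
      by (cases "0 \<le> \<epsilon>") auto
  qed
  then show False
    using assms(4,5) by blast
qed

lemma side_step:
  assumes "\<bar>\<epsilon>\<bar> \<le> 1" "admissible n p q a" "admissible n p' q a'"
    and "\<not> barrier n \<epsilon> p q a" "\<not> barrier n \<epsilon> p' q a'" "p' = Suc p \<or> p = Suc p'"
  shows "side n p' = side n p"
  using assms side_Suc_eq[OF assms(1)] by metis

section \<open>Quadrants along paths\<close>

lemma neighbours_sym: "neighbours n \<sigma> \<tau> \<Longrightarrow> neighbours n \<tau> \<sigma>"
  unfolding neighbours_def by (simp add: eq_commute)

lemma neighbours_single_vertex:
  assumes "neighbours n \<sigma> \<tau>"
  obtains v where "v \<in> verts n" "\<sigma> v \<noteq> \<tau> v" "\<sigma> v = 1 \<or> \<tau> v = 1" "\<And>i. i \<noteq> v \<Longrightarrow> \<sigma> i = \<tau> i"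
proof -
  have \<sigma>: "\<sigma> \<in> configs n" and \<tau>: "\<tau> \<in> configs n"
    using assms unfolding neighbours_def by auto
  obtain v where v: "{i \<in> verts n. \<sigma> i \<noteq> \<tau> i} = {v}"
    using assms unfolding neighbours_def by (auto simp: card_1_singleton_iff)
  then have "v \<in> verts n" "\<sigma> v \<noteq> \<tau> v"
    by auto
  moreover have "\<sigma> v = 1 \<or> \<tau> v = 1"
    using configs_sign[OF \<sigma> \<open>v \<in> verts n\<close>] configs_sign[OF \<tau> \<open>v \<in> verts n\<close>] \<open>\<sigma> v \<noteq> \<tau> v\<close> by auto
  moreover have "\<sigma> i = \<tau> i" if "i \<noteq> v" for i
    using v \<sigma> \<tau> that unfolding configs_def by (cases "i \<in> verts n") auto
  ultimately show ?thesis
    using that by blast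
qed

lemma card_plus_single_flip:
  fixes \<sigma> \<tau> :: "nat \<Rightarrow> int"
  assumes "\<And>i. i \<noteq> v \<Longrightarrow> \<sigma> i = \<tau> i" "\<sigma> v \<noteq> \<tau> v" "\<sigma> v = 1 \<or> \<tau> v = 1"
  shows "v \<notin> B \<Longrightarrow> card {i \<in> B. \<tau> i = 1} = card {i \<in> B. \<sigma> i = 1}"
    and "finite B \<Longrightarrow> v \<in> B \<Longrightarrow>
      card {i \<in> B. \<tau> i = 1} = Suc (card {i \<in> B. \<sigma> i = 1}) \<or>
      card {i \<in> B. \<sigma> i = 1} = Suc (card {i \<in> B. \<tau> i = 1})"
proof -
  show "v \<notin> B \<Longrightarrow> card {i \<in> B. \<tau> i = 1} = card {i \<in> B. \<sigma> i = 1}"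
    using assms(1) by (metis (mono_tags, lifting) Collect_cong)
  assume "finite B" "v \<in> B"
  let ?S = "{i \<in> B. \<sigma> i = 1}" and ?T = "{i \<in> B. \<tau> i = 1}"
  have common: "?T - {v} = ?S - {v}"
    using assms(1) by auto
  show "card ?T = Suc (card ?S) \<or> card ?S = Suc (card ?T)"
  proof (cases "\<sigma> v = 1")
    case True
    then have "card ?S = Suc (card (?S - {v}))"
      using \<open>finite B\<close> \<open>v \<in> B\<close> by (intro card.remove) auto
    moreover have "?T - {v} = ?T"
      using True assms(2) by auto
    ultimately show ?thesis
      using common by metis
  next
    case False
    then have "card ?T = Suc (card (?T - {v}))"
      using assms(3) \<open>finite B\<close> \<open>v \<in> B\<close> by (intro card.remove) auto
    moreover have "?S - {v} = ?S"
      using False by auto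
    ultimately show ?thesis
      using common by metis
  qed
qed

lemma neighbours_counts:
  assumes "neighbours n \<sigma> \<tau>"
  shows "plus2 n \<tau> = plus2 n \<sigma> \<and> (plus1 n \<tau> = Suc (plus1 n \<sigma>) \<or> plus1 n \<sigma> = Suc (plus1 n \<tau>)) \<or>
         plus1 n \<tau> = plus1 n \<sigma> \<and> (plus2 n \<tau> = Suc (plus2 n \<sigma>) \<or> plus2 n \<sigma> = Suc (plus2 n \<tau>))"
proof -
  obtain v where v: "v \<in> verts n" "\<sigma> v \<noteq> \<tau> v" "\<sigma> v = 1 \<or> \<tau> v = 1" "\<And>i. i \<noteq> v \<Longrightarrow> \<sigma> i = \<tau> i"
    using neighbours_single_vertex[OF assms] by blast
  note flip = card_plus_single_flip[of v \<sigma> \<tau>, OF v(4) v(2,3)]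
  show ?thesis
  proof (cases "v \<in> block1 n")
    case True
    then show ?thesis
      using flip block1_notin_block2 unfolding plus1_def plus2_def by simp
  next
    case False
    then have "v \<in> block2 n"
      using v(1) unfolding verts_eq_blocks by blast
    then show ?thesis
      using flip False unfolding plus1_def plus2_def by simp
  qed
qed

definition quadrant :: "nat \<Rightarrow> (nat \<Rightarrow> int) \<Rightarrow> int \<times> int" where
  "quadrant n \<sigma> = (side n (plus1 n \<sigma>), side n (plus2 n \<sigma>))"

lemma quadrant_step:
  assumes "\<bar>\<epsilon>\<bar> \<le> 1" "neighbours n \<sigma> \<tau>"
    and "\<not> barrier n \<epsilon> (plus1 n \<sigma>) (plus2 n \<sigma>) (plus_cross n \<sigma>)"
    and "\<not> barrier n \<epsilon> (plus1 n \<tau>) (plus2 n \<tau>) (plus_cross n \<tau>)"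
  shows "quadrant n \<tau> = quadrant n \<sigma>"
  using neighbours_counts[OF assms(2)]
proof
  assume h: "plus2 n \<tau> = plus2 n \<sigma> \<and> (plus1 n \<tau> = Suc (plus1 n \<sigma>) \<or> plus1 n \<sigma> = Suc (plus1 n \<tau>))"
  then have "side n (plus1 n \<tau>) = side n (plus1 n \<sigma>)"
    using side_step[OF assms(1) admissible_counts _ assms(3)] admissible_counts[of n \<tau>] assms(4) by simp
  then show ?thesis
    unfolding quadrant_def using h by simp
next
  assume h: "plus1 n \<tau> = plus1 n \<sigma> \<and> (plus2 n \<tau> = Suc (plus2 n \<sigma>) \<or> plus2 n \<sigma> = Suc (plus2 n \<tau>))"
  then have "side n (plus2 n \<tau>) = side n (plus2 n \<sigma>)"
    using side_step[of \<epsilon> n "plus2 n \<sigma>" "plus1 n \<sigma>" _ "plus2 n \<tau>"] assms(1,3,4)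
      admissible_counts[of n \<sigma>] admissible_counts[of n \<tau>]
    by (simp add: admissible_swap barrier_swap)
  then show ?thesis
    unfolding quadrant_def using h by simp
qed

lemma path_invariant:
  assumes "is_path n \<eta> \<eta>' \<omega>"
    and "\<And>\<sigma> \<tau>. \<sigma> \<in> set \<omega> \<Longrightarrow> \<tau> \<in> set \<omega> \<Longrightarrow> neighbours n \<sigma> \<tau> \<Longrightarrow> f \<tau> = f \<sigma>"
  shows "f \<eta>' = f \<eta>"
proof -
  have "f (\<omega> ! k) = f (\<omega> ! 0)" if "k < length \<omega>" for k
    using that
  proof (induction k)
    case (Suc k)
    then have "neighbours n (\<omega> ! k) (\<omega> ! Suc k)"
      using assms(1) unfolding is_path_def by blast
    then show ?case
      using Suc assms(2)[of "\<omega> ! k" "\<omega> ! Suc k"] by simp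
  qed simp
  moreover have "\<omega> \<noteq> []" "\<eta> = \<omega> ! 0" "\<eta>' = \<omega> ! (length \<omega> - 1)"
    using assms(1) unfolding is_path_def by (auto simp: hd_conv_nth last_conv_nth)
  ultimately show ?thesis
    by (metis diff_less length_greater_0_conv zero_less_one)
qed

section \<open>Stable states\<close>

definition const_config :: "nat \<Rightarrow> int \<Rightarrow> int \<Rightarrow> nat \<Rightarrow> int" where
  "const_config n c1 c2 = (\<lambda>i. if i \<in> block1 n then c1 else if i \<in> block2 n then c2 else 0)"

lemma const_config_in_configs:
  "c1 = 1 \<or> c1 = -1 \<Longrightarrow> c2 = 1 \<or> c2 = -1 \<Longrightarrow> const_config n c1 c2 \<in> configs n"
  unfolding configs_def const_config_def verts_eq_blocks by auto

lemma counts_const_config: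
  "plus1 n (const_config n c1 c2) = (if c1 = 1 then n else 0)"
  "plus2 n (const_config n c1 c2) = (if c2 = 1 then n else 0)"
  "plus_cross n (const_config n c1 c2) = (if c1 = 1 \<and> c2 = 1 then n else 0)"
proof -
  have "i + n \<in> block2 n" if "i \<in> block1 n" for i
    using that unfolding block1_def block2_def by auto
  then have "{i \<in> block1 n. const_config n c1 c2 i = 1} = (if c1 = 1 then block1 n else {})"
    "{i \<in> block2 n. const_config n c1 c2 i = 1} = (if c2 = 1 then block2 n else {})"
    "{i \<in> block1 n. const_config n c1 c2 i = 1 \<and> const_config n c1 c2 (i + n) = 1} =
      (if c1 = 1 \<and> c2 = 1 then block1 n else {})"
    unfolding const_config_def using block1_notin_block2 by auto
  then show "plus1 n (const_config n c1 c2) = (if c1 = 1 then n else 0)"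
    "plus2 n (const_config n c1 c2) = (if c2 = 1 then n else 0)"
    "plus_cross n (const_config n c1 c2) = (if c1 = 1 \<and> c2 = 1 then n else 0)"
    unfolding plus1_def plus2_def plus_cross_def by simp_all
qed

lemma energy_gt_of_interior:
  assumes "admissible n p1 p2 a" "0 < p1" "p1 < n" "\<bar>\<epsilon>\<bar> \<le> 1"
  shows "real n - (real n)^2 - \<bar>\<epsilon>\<bar> * real n < energy n \<epsilon> p1 p2 a"
proof -
  have "\<bar>2 * real p2 - real n\<bar> \<le> real n"
    using assms(1) unfolding admissible_def by auto
  then have "(2 * real p2 - real n)^2 \<le> (real n)^2"
    by (metis abs_of_nat power2_abs power_mono abs_ge_zero)
  moreover have "\<epsilon> * (real n - 2 * (real p1 + real p2 - 2 * real a)) \<le> \<bar>\<epsilon>\<bar> * real n"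
    using mult_le_abs_mult[OF cross_term_bounds(1)[OF assms(1)]] .
  moreover have "real n \<ge> 2"
    using assms(2,3) by simp
  moreover note square_le_of_interior[OF assms(2,3)]
  ultimately show ?thesis
    unfolding energy_def by argo
qed

lemma stable_counts_extreme:
  assumes "s \<in> stable_states n \<epsilon> 0" "\<bar>\<epsilon>\<bar> \<le> 1"
  shows "(plus1 n s = 0 \<or> plus1 n s = n) \<and> (plus2 n s = 0 \<or> plus2 n s = n)"
proof -
  have s: "s \<in> configs n" and min: "\<And>\<tau>. \<tau> \<in> configs n \<Longrightarrow> Ham n \<epsilon> 0 s \<le> Ham n \<epsilon> 0 \<tau>"
    using assms(1) unfolding stable_states_def by auto
  have "Ham n \<epsilon> 0 (const_config n 1 c) = real n - (real n)^2 - \<epsilon> * c * real n" if "c = 1 \<or> c = -1" for c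
    using that const_config_in_configs[of 1 c n]
    by (auto simp: Ham_eq_energy counts_const_config energy_def power2_eq_square algebra_simps)
  then have "Ham n \<epsilon> 0 s \<le> real n - (real n)^2 - \<bar>\<epsilon>\<bar> * real n"
    using min[OF const_config_in_configs[of 1 1]] min[OF const_config_in_configs[of 1 "-1"]]
    by (cases "\<epsilon> \<ge> 0") auto
  then have low: "energy n \<epsilon> (plus1 n s) (plus2 n s) (plus_cross n s) \<le> real n - (real n)^2 - \<bar>\<epsilon>\<bar> * real n"
    unfolding Ham_eq_energy[OF s] .
  have "plus1 n s \<le> n" "plus2 n s \<le> n"
    using admissible_counts[of n s] unfolding admissible_def by auto
  moreover have "\<not> (0 < plus1 n s \<and> plus1 n s < n)"
    using energy_gt_of_interior[OF admissible_counts[of n s] _ _ assms(2)] low by fastforce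
  moreover have "\<not> (0 < plus2 n s \<and> plus2 n s < n)"
    using energy_gt_of_interior[OF admissible_swap[THEN iffD2, OF admissible_counts[of n s]] _ _ assms(2)] low
    by (fastforce simp: energy_swap)
  ultimately show ?thesis
    by auto
qed

lemma value_of_card_plus_extreme:
  assumes "\<sigma> \<in> configs n" "B \<subseteq> verts n" "i \<in> B"
    and "card {j \<in> B. \<sigma> j = 1} = 0 \<or> card {j \<in> B. \<sigma> j = 1} = card B"
  shows "\<sigma> i = (if card {j \<in> B. \<sigma> j = 1} = card B then 1 else -1)"
proof -
  have fin: "finite B"
    using assms(2) finite_subset unfolding verts_def by blast
  then have "card B \<noteq> 0"
    using assms(3) by auto
  show ?thesis
  proof (cases "card {j \<in> B. \<sigma> j = 1} = card B")
    case True
    then have "{j \<in> B. \<sigma> j = 1} = B"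
      using fin by (intro card_subset_eq) auto
    then show ?thesis
      using True assms(3) by auto
  next
    case False
    then have "{j \<in> B. \<sigma> j = 1} = {}"
      using assms(4) fin by simp
    then show ?thesis
      using False assms(2,3) configs_sign[OF assms(1)] by auto
  qed
qed

lemma constant_on_iff_card_plus:
  assumes "\<sigma> \<in> configs n" "B \<subseteq> verts n"
  shows "(\<exists>c. \<forall>i\<in>B. \<sigma> i = c) \<longleftrightarrow> card {j \<in> B. \<sigma> j = 1} = 0 \<or> card {j \<in> B. \<sigma> j = 1} = card B"
proof
  assume "\<exists>c. \<forall>i\<in>B. \<sigma> i = c"
  then obtain c where "\<forall>i\<in>B. \<sigma> i = c"
    by blast
  then have "{j \<in> B. \<sigma> j = 1} = (if c = 1 then B else {})"
    by auto
  then show "card {j \<in> B. \<sigma> j = 1} = 0 \<or> card {j \<in> B. \<sigma> j = 1} = card B"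
    by simp
qed (use value_of_card_plus_extreme[OF assms] in blast)

lemma block_constant_iff_counts:
  assumes "\<sigma> \<in> configs n"
  shows "(\<exists>c. \<forall>i\<in>block1 n. \<sigma> i = c) \<longleftrightarrow> plus1 n \<sigma> = 0 \<or> plus1 n \<sigma> = n"
    and "(\<exists>c. \<forall>i\<in>block2 n. \<sigma> i = c) \<longleftrightarrow> plus2 n \<sigma> = 0 \<or> plus2 n \<sigma> = n"
  using constant_on_iff_card_plus[OF assms, of "block1 n"] constant_on_iff_card_plus[OF assms, of "block2 n"]
  unfolding plus1_def plus2_def verts_eq_blocks by auto

lemma eq_of_counts_extreme:
  assumes "\<sigma> \<in> configs n" "\<tau> \<in> configs n"
    and "plus1 n \<sigma> = 0 \<or> plus1 n \<sigma> = n" "plus2 n \<sigma> = 0 \<or> plus2 n \<sigma> = n"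
    and "plus1 n \<tau> = plus1 n \<sigma>" "plus2 n \<tau> = plus2 n \<sigma>"
  shows "\<tau> = \<sigma>"
proof
  fix i
  have "\<rho> i = (if plus1 n \<rho> = n then 1 else -1)" if "\<rho> \<in> configs n" "plus1 n \<rho> = 0 \<or> plus1 n \<rho> = n" "i \<in> block1 n" for \<rho>
    using value_of_card_plus_extreme[OF that(1), of "block1 n" i] that(2,3)
    unfolding plus1_def verts_eq_blocks by auto
  moreover have "\<rho> i = (if plus2 n \<rho> = n then 1 else -1)" if "\<rho> \<in> configs n" "plus2 n \<rho> = 0 \<or> plus2 n \<rho> = n" "i \<in> block2 n" for \<rho>
    using value_of_card_plus_extreme[OF that(1), of "block2 n" i] that(2,3)
    unfolding plus2_def verts_eq_blocks by auto
  moreover have "\<rho> i = 0" if "\<rho> \<in> configs n" "i \<notin> verts n" for \<rho>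
    using that unfolding configs_def by auto
  ultimately show "\<tau> i = \<sigma> i"
    using assms unfolding verts_eq_blocks by (metis Un_iff)
qed

lemma stable_eq_of_quadrant:
  assumes "s \<in> stable_states n \<epsilon> 0" "s' \<in> stable_states n \<epsilon> 0" "\<bar>\<epsilon>\<bar> \<le> 1"
    and "quadrant n s' = quadrant n s"
  shows "s' = s"
proof (rule eq_of_counts_extreme)
  show "s \<in> configs n" "s' \<in> configs n"
    using assms(1,2) unfolding stable_states_def by auto
  note extreme = stable_counts_extreme[OF assms(1,3)] stable_counts_extreme[OF assms(2,3)]
  then show "plus1 n s = 0 \<or> plus1 n s = n" "plus2 n s = 0 \<or> plus2 n s = n"
    by auto
  show "plus1 n s' = plus1 n s" "plus2 n s' = plus2 n s"
    using extreme assms(4) unfolding quadrant_def side_def by (cases "n = 0"; auto)+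
qed

lemma path_meets_barrier:
  assumes "\<bar>\<epsilon>\<bar> \<le> 1" "s1 \<in> stable_states n \<epsilon> 0" "s2 \<in> stable_states n \<epsilon> 0" "s1 \<noteq> s2"
    and "is_path n s1 s2 \<omega>"
  shows "\<exists>\<zeta>\<in>set \<omega>. crit_energy n \<epsilon> < Ham n \<epsilon> 0 \<zeta> \<or> \<zeta> \<in> Cstar n \<epsilon>"
proof (rule ccontr)
  assume "\<not> ?thesis"
  moreover have "set \<omega> \<subseteq> configs n"
    using assms(5) unfolding is_path_def by blast
  ultimately have "\<not> barrier n \<epsilon> (plus1 n \<zeta>) (plus2 n \<zeta>) (plus_cross n \<zeta>)" if "\<zeta> \<in> set \<omega>" for \<zeta>
    using that barrier_counts_iff by blast
  then have "quadrant n s2 = quadrant n s1"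
    using path_invariant[OF assms(5)] quadrant_step[OF assms(1)] by blast
  then show False
    using stable_eq_of_quadrant[OF assms(2,3,1)] assms(4) by blast
qed

section \<open>Configurations with a constant block\<close>

lemma neg_abs_le_mult:
  fixes e x :: real
  assumes "\<bar>e\<bar> \<le> 1"
  shows "- \<bar>x\<bar> \<le> e * x"
proof -
  have "\<bar>e\<bar> * \<bar>x\<bar> \<le> \<bar>x\<bar>"
    using assms by (simp add: mult_left_le_one_le)
  then show ?thesis
    using mult_le_abs_mult[of "- x" "\<bar>x\<bar>" e] by simp
qed

lemma quadratic_margin_even:
  fixes u :: int and e :: real
  assumes "\<bar>e\<bar> \<le> 1" "even u"
  shows "0 \<le> (real_of_int u)^2 / 2 + e * u"
proof -
  have "\<bar>u\<bar> = 0 \<or> 2 \<le> \<bar>u\<bar>"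
    using assms(2) by presburger
  then have "2 * \<bar>u\<bar> \<le> \<bar>u\<bar> * \<bar>u\<bar>"
    using mult_right_mono[of 2 "\<bar>u\<bar>" "\<bar>u\<bar>"] by auto
  then have "real_of_int (2 * \<bar>u\<bar>) \<le> real_of_int (\<bar>u\<bar> * \<bar>u\<bar>)"
    by (simp only: of_int_le_iff)
  then show ?thesis
    using neg_abs_le_mult[OF assms(1), of "real_of_int u"] by (simp add: power2_eq_square)
qed

lemma quadratic_margin_odd:
  fixes u :: int and e :: real
  assumes "\<bar>e\<bar> \<le> 1" "odd u"
  shows "0 \<le> ((real_of_int u)^2 - 1) / 2 + e * u + \<bar>e\<bar>"
proof -
  have "\<bar>u\<bar> = 1 \<or> 3 \<le> \<bar>u\<bar>"
    using assms(2) by presburger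
  then show ?thesis
  proof
    assume "\<bar>u\<bar> = 1"
    then have "u = 1 \<or> u = -1"
      by auto
    then show ?thesis
      by auto
  next
    assume "3 \<le> \<bar>u\<bar>"
    then have "3 * \<bar>u\<bar> \<le> \<bar>u\<bar> * \<bar>u\<bar>"
      using mult_right_mono[of 3 "\<bar>u\<bar>" "\<bar>u\<bar>"] by auto
    then have "real_of_int (3 * \<bar>u\<bar>) \<le> real_of_int (\<bar>u\<bar> * \<bar>u\<bar>)"
      by (simp only: of_int_le_iff)
    then have "3 * \<bar>real_of_int u\<bar> \<le> real_of_int u * real_of_int u"
      by simp
    moreover have "3 \<le> \<bar>real_of_int u\<bar>"
      using \<open>3 \<le> \<bar>u\<bar>\<close> by linarith
    ultimately show ?thesis
      using neg_abs_le_mult[OF assms(1), of "real_of_int u"] abs_ge_zero[of e]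
      unfolding power2_eq_square by argo
  qed
qed

lemma energy_le_crit_of_extreme:
  assumes "admissible n p1 p2 a" "p2 = 0 \<or> p2 = n" "\<bar>\<epsilon>\<bar> \<le> 1"
  shows "energy n \<epsilon> p1 p2 a \<le> crit_energy n \<epsilon>"
proof -
  define x where "x = 2 * int p1 - int n"
  obtain u where u: "u = x \<or> u = - x"
    and E: "energy n \<epsilon> p1 p2 a = real n - ((real_of_int u)^2 + (real n)^2) / 2 - \<epsilon> * real_of_int u"
  proof (cases "p2 = 0")
    case True
    then have "a = 0"
      using assms(1) unfolding admissible_def by simp
    with True have "energy n \<epsilon> p1 p2 a = real n - ((real_of_int (- x))^2 + (real n)^2) / 2 - \<epsilon> * real_of_int (- x)"
      unfolding energy_def x_def by (simp add: power2_eq_square algebra_simps)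
    then show ?thesis
      using that by blast
  next
    case False
    then have "p2 = n" "a = p1"
      using assms(1,2) unfolding admissible_def by auto
    then have "energy n \<epsilon> p1 p2 a = real n - ((real_of_int x)^2 + (real n)^2) / 2 - \<epsilon> * real_of_int x"
      unfolding energy_def x_def by (simp add: power2_eq_square algebra_simps)
    then show ?thesis
      using that by blast
  qed
  have "even u \<longleftrightarrow> even n"
    using u unfolding x_def by auto
  then show ?thesis
    unfolding E crit_energy_def
    using quadratic_margin_even[OF assms(3), of u] quadratic_margin_odd[OF assms(3), of u]
    by (auto simp: field_simps)
qed

definition moves_within :: "nat \<Rightarrow> (nat \<Rightarrow> int) set \<Rightarrow> (nat \<Rightarrow> int) \<Rightarrow> (nat \<Rightarrow> int) \<Rightarrow> bool" where
  "moves_within n S \<sigma> \<tau> \<longleftrightarrow> neighbours n \<sigma> \<tau> \<and> \<sigma> \<in> S \<and> \<tau> \<in> S"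

lemma moves_within_rtranclp_sym:
  "(moves_within n S)\<^sup>*\<^sup>* \<sigma> \<tau> \<Longrightarrow> (moves_within n S)\<^sup>*\<^sup>* \<tau> \<sigma>"
proof -
  have "symp (moves_within n S)"
    unfolding moves_within_def by (auto intro: sympI neighbours_sym)
  then show "(moves_within n S)\<^sup>*\<^sup>* \<sigma> \<tau> \<Longrightarrow> (moves_within n S)\<^sup>*\<^sup>* \<tau> \<sigma>"
    by (rule sympD[OF symp_rtranclp])
qed

lemma moves_within_rtranclp_mono:
  "S \<subseteq> T \<Longrightarrow> (moves_within n S)\<^sup>*\<^sup>* \<sigma> \<tau> \<Longrightarrow> (moves_within n T)\<^sup>*\<^sup>* \<sigma> \<tau>"
  by (rule rtranclp_mono[THEN predicate2D, rotated]) (auto simp: moves_within_def)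

lemma is_path_Cons:
  assumes "is_path n \<sigma>' \<rho> \<omega>" "neighbours n \<sigma> \<sigma>'"
  shows "is_path n \<sigma> \<rho> (\<sigma> # \<omega>)"
proof -
  have "\<omega> \<noteq> []" "hd \<omega> = \<sigma>'" "\<sigma> \<in> configs n"
    using assms unfolding is_path_def neighbours_def by auto
  then have "neighbours n ((\<sigma> # \<omega>) ! k) ((\<sigma> # \<omega>) ! Suc k)" if "Suc k < length (\<sigma> # \<omega>)" for k
    using assms that unfolding is_path_def by (cases k) (auto simp: hd_conv_nth)
  then show ?thesis
    using assms(1) \<open>\<sigma> \<in> configs n\<close> unfolding is_path_def by auto
qed

lemma path_of_moves_within:
  assumes "(moves_within n S)\<^sup>*\<^sup>* \<sigma> \<tau>" "is_path n \<tau> \<rho> \<omega>"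
  shows "\<exists>\<omega>'. is_path n \<sigma> \<rho> \<omega>' \<and> set \<omega>' \<subseteq> S \<union> set \<omega> \<and> set \<omega> \<subseteq> set \<omega>'"
  using assms(1)
proof (induction rule: converse_rtranclp_induct)
  case base
  then show ?case
    using assms(2) by blast
next
  case (step \<sigma> \<sigma>')
  then obtain \<omega>' where "is_path n \<sigma>' \<rho> \<omega>'" "set \<omega>' \<subseteq> S \<union> set \<omega>" "set \<omega> \<subseteq> set \<omega>'"
    by blast
  moreover have "neighbours n \<sigma> \<sigma>'" "\<sigma> \<in> S"
    using step(1) unfolding moves_within_def by auto
  ultimately show ?case
    using is_path_Cons by (metis insert_subset list.simps(15) subset_insertI2 Un_iff)
qed

definition fill_block :: "(nat \<Rightarrow> int) \<Rightarrow> nat set \<Rightarrow> int \<Rightarrow> nat \<Rightarrow> int" where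
  "fill_block \<sigma> B c = (\<lambda>i. if i \<in> B then c else \<sigma> i)"

lemma neighbours_update:
  assumes "\<sigma> \<in> configs n" "v \<in> verts n" "c = 1 \<or> c = -1" "\<sigma> v \<noteq> c"
  shows "neighbours n \<sigma> (\<sigma>(v := c))"
proof -
  have "{i \<in> verts n. \<sigma> i \<noteq> (\<sigma>(v := c)) i} = {v}"
    using assms(2,4) by auto
  moreover have "\<sigma>(v := c) \<in> configs n"
    using assms(1-3) unfolding configs_def by auto
  ultimately show ?thesis
    using assms(1) unfolding neighbours_def by simp
qed

lemma moves_to_fill_block:
  assumes "B \<subseteq> verts n" "c = 1 \<or> c = -1" "\<sigma> \<in> configs n"
  shows "(moves_within n {\<tau> \<in> configs n. \<forall>i. i \<notin> B \<longrightarrow> \<tau> i = \<sigma> i})\<^sup>*\<^sup>* \<sigma> (fill_block \<sigma> B c)"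
proof -
  let ?S = "{\<tau> \<in> configs n. \<forall>i. i \<notin> B \<longrightarrow> \<tau> i = \<sigma> i}"
  have "(moves_within n ?S)\<^sup>*\<^sup>* \<sigma> (fill_block \<sigma> F c)" if "finite F" "F \<subseteq> B" for F
    using that
  proof (induction F rule: finite_subset_induct')
    case empty
    have "fill_block \<sigma> {} c = \<sigma>"
      by (simp add: fill_block_def)
    then show ?case
      by simp
  next
    case (insert v F)
    let ?\<tau> = "fill_block \<sigma> F c"
    have in_S: "?\<tau> \<in> ?S" "?\<tau>(v := c) \<in> ?S"
      using assms insert.hyps(2,3) unfolding fill_block_def configs_def by auto
    have filled: "fill_block \<sigma> (insert v F) c = ?\<tau>(v := c)"
      by (auto simp: fill_block_def)
    show ?case
    proof (cases "?\<tau> v = c")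
      case True
      then have "fill_block \<sigma> (insert v F) c = ?\<tau>"
        unfolding filled by auto
      then show ?thesis
        using insert.IH by simp
    next
      case False
      then have "moves_within n ?S ?\<tau> (fill_block \<sigma> (insert v F) c)"
        using neighbours_update[of ?\<tau> n v c] in_S assms(1,2) insert.hyps(2)
        unfolding moves_within_def filled by auto
      then show ?thesis
        by (rule rtranclp.rtrancl_into_rtrancl[OF insert.IH])
    qed
  qed
  moreover have "finite B"
    using assms(1) finite_subset unfolding verts_def by blast
  ultimately show ?thesis
    by blast
qed

lemma fill_block_in_configs:
  "B \<subseteq> verts n \<Longrightarrow> c = 1 \<or> c = -1 \<Longrightarrow> \<sigma> \<in> configs n \<Longrightarrow> fill_block \<sigma> B c \<in> configs n"
  unfolding configs_def fill_block_def by auto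

definition block_constant_configs :: "nat \<Rightarrow> (nat \<Rightarrow> int) set" where
  "block_constant_configs n =
    {\<sigma> \<in> configs n. (\<exists>c. \<forall>i\<in>block1 n. \<sigma> i = c) \<or> (\<exists>c. \<forall>i\<in>block2 n. \<sigma> i = c)}"

lemma Ham_le_crit_of_block_constant:
  assumes "\<sigma> \<in> block_constant_configs n" "\<bar>\<epsilon>\<bar> \<le> 1"
  shows "Ham n \<epsilon> 0 \<sigma> \<le> crit_energy n \<epsilon>"
proof -
  have \<sigma>: "\<sigma> \<in> configs n"
    using assms(1) unfolding block_constant_configs_def by blast
  then have "plus1 n \<sigma> = 0 \<or> plus1 n \<sigma> = n \<or> plus2 n \<sigma> = 0 \<or> plus2 n \<sigma> = n"
    using assms(1) block_constant_iff_counts[OF \<sigma>] unfolding block_constant_configs_def by blast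
  then show ?thesis
    unfolding Ham_eq_energy[OF \<sigma>]
    using energy_le_crit_of_extreme[OF admissible_counts _ assms(2)]
      energy_le_crit_of_extreme[OF admissible_swap[THEN iffD2, OF admissible_counts] _ assms(2)]
    by (auto simp: energy_swap)
qed

lemma Cstar_subset_block_constant: "Cstar n \<epsilon> \<subseteq> block_constant_configs n"
proof
  fix \<zeta> assume "\<zeta> \<in> Cstar n \<epsilon>"
  then have \<zeta>: "\<zeta> \<in> configs n" and "Cstar_counts n \<epsilon> (plus1 n \<zeta>) (plus2 n \<zeta>) (plus_cross n \<zeta>)"
    unfolding Cstar_iff_counts by auto
  then have "plus1 n \<zeta> = 0 \<or> plus1 n \<zeta> = n \<or> plus2 n \<zeta> = 0 \<or> plus2 n \<zeta> = n"
    unfolding Cstar_counts_def by (auto split: if_splits)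
  then show "\<zeta> \<in> block_constant_configs n"
    using block_constant_iff_counts[OF \<zeta>] \<zeta> unfolding block_constant_configs_def by blast
qed

lemma stable_in_block_constant:
  assumes "s \<in> stable_states n \<epsilon> 0" "\<bar>\<epsilon>\<bar> \<le> 1"
  shows "s \<in> block_constant_configs n"
proof -
  have "s \<in> configs n"
    using assms(1) unfolding stable_states_def by blast
  then show ?thesis
    using stable_counts_extreme[OF assms] block_constant_iff_counts
    unfolding block_constant_configs_def by blast
qed

lemma Ham_Cstar: "\<zeta> \<in> Cstar n \<epsilon> \<Longrightarrow> Ham n \<epsilon> 0 \<zeta> = crit_energy n \<epsilon>"
  using Cstar_iff_counts Ham_eq_energy energy_eq_crit_of_Cstar_counts by metis

lemma moves_fill_block_within_block_constant:
  assumes "\<sigma> \<in> configs n" "B \<subseteq> verts n" "B' = block1 n \<or> B' = block2 n" "B \<inter> B' = {}"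
    and "\<forall>i\<in>B'. \<sigma> i = c"
  shows "(moves_within n (block_constant_configs n))\<^sup>*\<^sup>* \<sigma> (fill_block \<sigma> B 1)"
proof (rule moves_within_rtranclp_mono[OF _ moves_to_fill_block[OF assms(2) _ assms(1)]])
  show "{\<tau> \<in> configs n. \<forall>i. i \<notin> B \<longrightarrow> \<tau> i = \<sigma> i} \<subseteq> block_constant_configs n"
  proof
    fix \<tau> assume \<tau>: "\<tau> \<in> {\<tau> \<in> configs n. \<forall>i. i \<notin> B \<longrightarrow> \<tau> i = \<sigma> i}"
    then have "\<forall>i\<in>B'. \<tau> i = c"
      using assms(4,5) by auto
    then show "\<tau> \<in> block_constant_configs n"
      using assms(3) \<tau> unfolding block_constant_configs_def by auto
  qed
qed simp

lemma moves_to_all_plus: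
  assumes "\<sigma> \<in> block_constant_configs n"
  shows "(moves_within n (block_constant_configs n))\<^sup>*\<^sup>* \<sigma> (const_config n 1 1)"
proof -
  have \<sigma>: "\<sigma> \<in> configs n"
    using assms unfolding block_constant_configs_def by blast
  have "(moves_within n (block_constant_configs n))\<^sup>*\<^sup>* \<sigma> (const_config n 1 1)"
    if blocks: "B = block1 n \<and> B' = block2 n \<or> B = block2 n \<and> B' = block1 n" and "\<forall>i\<in>B'. \<sigma> i = c" for B B' c
  proof -
    have B: "B \<subseteq> verts n" "B' \<subseteq> verts n" "B \<inter> B' = {}" "B' \<inter> B = {}"
      using blocks block1_notin_block2 unfolding verts_eq_blocks by auto
    let ?\<sigma>1 = "fill_block \<sigma> B 1"
    have "?\<sigma>1 \<in> configs n" "\<forall>i\<in>B. ?\<sigma>1 i = 1"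
      using fill_block_in_configs[OF B(1) _ \<sigma>] by (auto simp: fill_block_def)
    then have "(moves_within n (block_constant_configs n))\<^sup>*\<^sup>* ?\<sigma>1 (fill_block ?\<sigma>1 B' 1)"
      using moves_fill_block_within_block_constant[OF _ B(2) _ B(4)] blocks by blast
    moreover have "(moves_within n (block_constant_configs n))\<^sup>*\<^sup>* \<sigma> ?\<sigma>1"
      using moves_fill_block_within_block_constant[OF \<sigma> B(1) _ B(3) that(2)] blocks by blast
    moreover have "fill_block ?\<sigma>1 B' 1 = const_config n 1 1"
    proof
      fix i
      show "fill_block ?\<sigma>1 B' 1 i = const_config n 1 1 i"
        using \<sigma> blocks block1_notin_block2[of i n]
        unfolding fill_block_def const_config_def configs_def verts_eq_blocks by auto
    qed
    ultimately show ?thesis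
      by (metis rtranclp_trans)
  qed
  then show ?thesis
    using assms unfolding block_constant_configs_def by blast
qed

lemma path_through_block_constant:
  assumes "\<eta> \<in> block_constant_configs n" "\<eta>' \<in> block_constant_configs n" "\<zeta> \<in> block_constant_configs n"
  shows "\<exists>\<omega>. is_path n \<eta> \<eta>' \<omega> \<and> set \<omega> \<subseteq> block_constant_configs n \<and> \<zeta> \<in> set \<omega>"
proof -
  let ?K = "block_constant_configs n"
  have reach: "(moves_within n ?K)\<^sup>*\<^sup>* \<sigma> \<tau>" if "\<sigma> \<in> ?K" "\<tau> \<in> ?K" for \<sigma> \<tau>
    using moves_to_all_plus[OF that(1)] moves_within_rtranclp_sym[OF moves_to_all_plus[OF that(2)]]
    by (rule rtranclp_trans)
  have "is_path n \<eta>' \<eta>' [\<eta>']"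
    using assms(2) unfolding is_path_def block_constant_configs_def by simp
  then obtain \<omega>' where \<omega>': "is_path n \<zeta> \<eta>' \<omega>'" "set \<omega>' \<subseteq> ?K \<union> {\<eta>'}"
    using path_of_moves_within[OF reach[OF assms(3,2)]] by fastforce
  then obtain \<omega> where "is_path n \<eta> \<eta>' \<omega>" "set \<omega> \<subseteq> ?K \<union> set \<omega>'" "set \<omega>' \<subseteq> set \<omega>"
    using path_of_moves_within[OF reach[OF assms(1,3)]] by blast
  moreover have "\<zeta> \<in> set \<omega>'"
    using \<omega>'(1) unfolding is_path_def by (metis hd_in_set)
  ultimately show ?thesis
    using \<omega>'(2) assms(2) by blast
qed

section \<open>Communication height and the gate\<close>

lemma Ham_le_path_height: "\<zeta> \<in> set \<omega> \<Longrightarrow> Ham n \<epsilon> h \<zeta> \<le> path_height n \<epsilon> h \<omega>"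
  unfolding path_height_def by (simp add: Max_ge)

lemma path_height_le_crit:
  assumes "is_path n \<eta> \<eta>' \<omega>" "set \<omega> \<subseteq> block_constant_configs n" "\<bar>\<epsilon>\<bar> \<le> 1"
  shows "path_height n \<epsilon> 0 \<omega> \<le> crit_energy n \<epsilon>"
  using assms Ham_le_crit_of_block_constant unfolding path_height_def is_path_def
  by (subst Max_le_iff) auto

lemma crit_le_path_height:
  assumes "\<bar>\<epsilon>\<bar> \<le> 1" "s1 \<in> stable_states n \<epsilon> 0" "s2 \<in> stable_states n \<epsilon> 0" "s1 \<noteq> s2"
    and "is_path n s1 s2 \<omega>"
  shows "crit_energy n \<epsilon> \<le> path_height n \<epsilon> 0 \<omega>"
proof -
  obtain \<zeta> where "\<zeta> \<in> set \<omega>" "crit_energy n \<epsilon> < Ham n \<epsilon> 0 \<zeta> \<or> \<zeta> \<in> Cstar n \<epsilon>"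
    using path_meets_barrier[OF assms] by blast
  then show ?thesis
    using Ham_le_path_height[of \<zeta> \<omega> n \<epsilon> 0] Ham_Cstar[of \<zeta> n \<epsilon>] by force
qed

lemma comm_height_eq_crit:
  assumes "\<bar>\<epsilon>\<bar> \<le> 1" "s1 \<in> stable_states n \<epsilon> 0" "s2 \<in> stable_states n \<epsilon> 0" "s1 \<noteq> s2"
  shows "comm_height n \<epsilon> 0 s1 s2 = crit_energy n \<epsilon>"
  unfolding comm_height_def
proof (rule cInf_eq_minimum)
  obtain \<omega> where "is_path n s1 s2 \<omega>" "set \<omega> \<subseteq> block_constant_configs n"
    using path_through_block_constant stable_in_block_constant[OF assms(2,1)]
      stable_in_block_constant[OF assms(3,1)] by blast
  then show "crit_energy n \<epsilon> \<in> {path_height n \<epsilon> 0 \<omega> |\<omega>. is_path n s1 s2 \<omega>}"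
    using path_height_le_crit[OF _ _ assms(1)] crit_le_path_height[OF assms]
    by (metis (mono_tags, lifting) mem_Collect_eq order_antisym)
qed (use crit_le_path_height[OF assms] in blast)

lemma opt_paths_iff_height_crit:
  assumes "\<bar>\<epsilon>\<bar> \<le> 1" "s1 \<in> stable_states n \<epsilon> 0" "s2 \<in> stable_states n \<epsilon> 0" "s1 \<noteq> s2"
  shows "\<omega> \<in> opt_paths n \<epsilon> 0 s1 s2 \<longleftrightarrow> is_path n s1 s2 \<omega> \<and> path_height n \<epsilon> 0 \<omega> = crit_energy n \<epsilon>"
  unfolding opt_paths_def comm_height_eq_crit[OF assms] by simp

lemma Cstar_subset_min_saddles:
  assumes "\<bar>\<epsilon>\<bar> \<le> 1" "s1 \<in> stable_states n \<epsilon> 0" "s2 \<in> stable_states n \<epsilon> 0" "s1 \<noteq> s2"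
  shows "Cstar n \<epsilon> \<subseteq> min_saddles n \<epsilon> 0 s1 s2"
proof
  fix \<zeta> assume \<zeta>: "\<zeta> \<in> Cstar n \<epsilon>"
  then have "\<zeta> \<in> block_constant_configs n"
    using Cstar_subset_block_constant by blast
  then obtain \<omega> where \<omega>: "is_path n s1 s2 \<omega>" "set \<omega> \<subseteq> block_constant_configs n" "\<zeta> \<in> set \<omega>"
    using path_through_block_constant[OF stable_in_block_constant[OF assms(2,1)]
        stable_in_block_constant[OF assms(3,1)]] by blast
  then have "path_height n \<epsilon> 0 \<omega> = crit_energy n \<epsilon>"
    using path_height_le_crit[OF \<omega>(1,2) assms(1)] crit_le_path_height[OF assms \<omega>(1)] by simp
  then have "\<omega> \<in> opt_paths n \<epsilon> 0 s1 s2"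
    using opt_paths_iff_height_crit[OF assms] \<omega>(1) by blast
  then show "\<zeta> \<in> min_saddles n \<epsilon> 0 s1 s2"
    unfolding min_saddles_def using \<omega>(3) Ham_Cstar[OF \<zeta>] \<open>path_height n \<epsilon> 0 \<omega> = _\<close> by auto
qed

lemma opt_path_meets_Cstar:
  assumes "\<bar>\<epsilon>\<bar> \<le> 1" "s1 \<in> stable_states n \<epsilon> 0" "s2 \<in> stable_states n \<epsilon> 0" "s1 \<noteq> s2"
    and "\<omega> \<in> opt_paths n \<epsilon> 0 s1 s2"
  shows "set \<omega> \<inter> Cstar n \<epsilon> \<noteq> {}"
proof -
  have \<omega>: "is_path n s1 s2 \<omega>" "path_height n \<epsilon> 0 \<omega> = crit_energy n \<epsilon>"
    using assms(5) opt_paths_iff_height_crit[OF assms(1-4)] by auto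
  then obtain \<zeta> where "\<zeta> \<in> set \<omega>" "crit_energy n \<epsilon> < Ham n \<epsilon> 0 \<zeta> \<or> \<zeta> \<in> Cstar n \<epsilon>"
    using path_meets_barrier[OF assms(1-4)] by blast
  then show ?thesis
    using Ham_le_path_height[of \<zeta> \<omega> n \<epsilon> 0] \<omega>(2) by auto
qed

theorem theorem2p3:
  fixes n :: nat and \<epsilon> :: real and s1 s2 :: "nat \<Rightarrow> int"
  assumes "n \<ge> 2" and "-1 \<le> \<epsilon>" and "\<epsilon> \<le> 1"
    and "s1 \<in> stable_states n \<epsilon> 0" and "s2 \<in> stable_states n \<epsilon> 0" and "s1 \<noteq> s2"
  shows "is_gate n \<epsilon> 0 (Cstar n \<epsilon>) s1 s2"
proof -
  have "\<bar>\<epsilon>\<bar> \<le> 1"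
    using assms(2,3) by auto
  then show ?thesis
    unfolding is_gate_def
    using Cstar_subset_min_saddles opt_path_meets_Cstar assms(4-6) by blast
qed

end
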